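(* Let $H_i$ ($i\in\mathbb{N}$) and $H$ be functions $[0,T]\times\mathbb{R}^n\times\mathbb{R}^n\to\mathbb{R}$, each satisfying (H1)–(H4) and (HLC). Let $(\mathbb{R}^{n+1},f_i,l_i)$ and $(\mathbb{R}^{n+1},f,l)$ be the Steiner representations of $H_i$ and $H$ (as defined in the context). If for every $t\in[0,T]$ the functions $H_i(t,\cdot,\cdot)$ converge to $H(t,\cdot,\cdot)$ uniformly on compact subsets of $\mathbb{R}^n\times\mathbb{R}^n$, then for every $t\in[0,T]$, $f_i(t,\cdot,\cdot)\to f(t,\cdot,\cdot)$ and $l_i(t,\cdot,\cdot)\to l(t,\cdot,\cdot)$ uniformly on compact subsets of $\mathbb{R}^n\times\mathbb{R}^{n+1}$.
   Context: Hypotheses on $H:[0,T]\times\mathbb{R}^n\times\mathbb{R}^n\to\mathbb{R}$: (H1) $H(\cdot,x,p)$ Lebesgue measurable; (H2) $H(t,\cdot,\cdot)$ continuous; (H3) $H(t,x,\cdot)$ convex; (H4) there is a measurable $c\ge0$ with $|H(t,x,p)-H(t,x,q)|\le c(t)(1+|x|)|p-q|$; (HLC) for every $R>0$ there is a measurable $k_R\ge0$ with $|H(t,x,p)-H(t,y,p)|\le k_R(t)(1+|p|)|x-y|$ for $x,y\in\bar B_R$ (closed ball of radius $R$ about $0$), all $p$. $H^*(t,x,v)=\sup_p\{\langle v,p\rangle-H(t,x,p)\}$. Steiner representation: $E(t,x)=\mathrm{epi}\,H^*(t,x,\cdot)\subset\mathbb{R}^{n+1}$; $\Phi(t,x,a)=E(t,x)\cap\bar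 B(a,2d(a,E(t,x)))$ for $a\in\mathbb{R}^{n+1}$ ($d$ = Euclidean distance to a set); Steiner point of a nonempty compact convex $K\subset\mathbb{R}^m$: $s_m(K)=m\int_{S^{m-1}}p\,\max_{y\in K}\langle p,y\rangle\,\mu(dp)$, $\mu$ the normalized rotation-invariant measure on the unit sphere; $e(t,x,a)=s_{n+1}(\Phi(t,x,a))=(f(t,x,a),l(t,x,a))$ with $f\in\mathbb{R}^n$, $l\in\mathbb{R}$. *)

theory Defs
  imports "HOL-Analysis.Analysis"
begin

text \<open>Standing hypotheses (H1)-(H4) and (HLC) on H : [0,T] x R^n x R^n -> R.
  R^n is modelled by a Euclidean space 'a, R^(n+1) by 'a \<times> real.\<close>

definition hyp_H :: "real \<Rightarrow> (real \<Rightarrow> 'a::euclidean_space \<Rightarrow> 'a \<Rightarrow> real) \<Rightarrow> bool" where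
  "hyp_H T H \<longleftrightarrow>
     (\<forall>x p. (\<lambda>t. H t x p) \<in> borel_measurable (lebesgue_on {0..T})) \<and>
     (\<forall>t\<in>{0..T}. continuous_on UNIV (\<lambda>(x, p). H t x p)) \<and>
     (\<forall>t\<in>{0..T}. \<forall>x. convex_on UNIV (H t x)) \<and>
     (\<exists>c. c \<in> borel_measurable (lebesgue_on {0..T}) \<and> (\<forall>t\<in>{0..T}. 0 \<le> c t) \<and>
        (\<forall>t\<in>{0..T}. \<forall>x p q. \<bar>H t x p - H t x q\<bar> \<le> c t * (1 + norm x) * norm (p - q))) \<and>
     (\<forall>R>0. \<exists>k. k \<in> borel_measurable (lebesgue_on {0..T}) \<and> (\<forall>t\<in>{0..T}. 0 \<le> k t) \<and>
        (\<forall>t\<in>{0..T}. \<forall>x\<in>cball 0 R. \<forall>y\<in>cball 0 R. \<forall>p.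
            \<bar>H t x p - H t y p\<bar> \<le> k t * (1 + norm p) * norm (x - y)))"

definition conj_H :: "(real \<Rightarrow> 'a::euclidean_space \<Rightarrow> 'a \<Rightarrow> real) \<Rightarrow> real \<Rightarrow> 'a \<Rightarrow> 'a \<Rightarrow> ereal" where
  "conj_H H t x v = (SUP p. ereal (inner v p - H t x p))"

definition epiE :: "(real \<Rightarrow> 'a::euclidean_space \<Rightarrow> 'a \<Rightarrow> real) \<Rightarrow> real \<Rightarrow> 'a \<Rightarrow> ('a \<times> real) set" where
  "epiE H t x = {(v, r). conj_H H t x v \<le> ereal r}"

definition PhiS :: "(real \<Rightarrow> 'a::euclidean_space \<Rightarrow> 'a \<Rightarrow> real) \<Rightarrow> real \<Rightarrow> 'a \<Rightarrow> ('a \<times> real) \<Rightarrow> ('a \<times> real) set" where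
  "PhiS H t x a = epiE H t x \<inter> cball a (2 * infdist a (epiE H t x))"

text \<open>Steiner point s_m(K) = m \<integral>_{S^{m-1}} p max_{y\<in>K} <p,y> \<mu>(dp), where the normalized
  rotation-invariant measure \<mu> on the unit sphere is realised as the image of normalized
  Lebesgue measure on the unit ball under x \<mapsto> x/|x| (cone-measure construction of \<mu>).\<close>
definition support_fun :: "'b::euclidean_space set \<Rightarrow> 'b \<Rightarrow> real" where
  "support_fun K p = (SUP y\<in>K. inner p y)"

definition steiner_point :: "'b::euclidean_space set \<Rightarrow> 'b" where
  "steiner_point K =
     (real DIM('b) / measure lborel (ball (0::'b) 1)) *\<^sub>R
       set_lebesgue_integral lborel (ball (0::'b) 1)
         (\<lambda>x. support_fun K (sgn x) *\<^sub>R sgn x)"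

definition steiner_e :: "(real \<Rightarrow> 'a::euclidean_space \<Rightarrow> 'a \<Rightarrow> real) \<Rightarrow> real \<Rightarrow> 'a \<Rightarrow> ('a \<times> real) \<Rightarrow> 'a \<times> real" where
  "steiner_e H t x a = steiner_point (PhiS H t x a)"

definition steiner_f :: "(real \<Rightarrow> 'a::euclidean_space \<Rightarrow> 'a \<Rightarrow> real) \<Rightarrow> real \<Rightarrow> 'a \<Rightarrow> ('a \<times> real) \<Rightarrow> 'a" where
  "steiner_f H t x a = fst (steiner_e H t x a)"

definition steiner_l :: "(real \<Rightarrow> 'a::euclidean_space \<Rightarrow> 'a \<Rightarrow> real) \<Rightarrow> real \<Rightarrow> 'a \<Rightarrow> ('a \<times> real) \<Rightarrow> real" where
  "steiner_l H t x a = snd (steiner_e H t x a)"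

end

theory Submission
  imports Defs
begin

(* The Steiner point is an integral of the support function over the sphere, so by dominated
   convergence it depends continuously on the set as soon as the support functions converge
   pointwise under a uniform bound.

   Locally uniform convergence of the convex functions H_i(t, x_i, .) to H(t, x, .) makes the
   epigraphs of their conjugates converge in the sense of Painleve and Kuratowski. A point (v, r)
   of the limit epigraph is approximated by (v - delta p, r + eta), where p maximises
   <v, q> - H_i(q) - delta/2 |q|^2 (a proximal point, so v - delta p is a subgradient of H_i at p);
   a point outside it violates one affine inequality at some p, and so do all nearby points for
   the H_i with i large.

   Intersecting with the balls of radius twice the distance to a_i preserves this convergence,
   because convexity of the limit epigraph supplies points strictly inside the limit ball, and
   yields uniformly bounded compact sets, whose support functions therefore converge. Hence
   e_i(t, x_i, a_i) -> e(t, x, a) whenever (x_i, a_i) -> (x, a), which on compact sets amounts to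
   uniform convergence. *)

section \<open>Support functions and the Steiner point\<close>

lemma inner_le_support_fun:
  fixes K :: "'b::euclidean_space set"
  assumes "bounded K" and "y \<in> K"
  shows "inner u y \<le> support_fun K u"
proof -
  obtain B where B: "\<And>y. y \<in> K \<Longrightarrow> norm y \<le> B"
    using assms(1) bounded_iff by metis
  have "inner u y \<le> norm u * B" if "y \<in> K" for y
    using norm_cauchy_schwarz[of u y] B[OF that] by (meson mult_left_mono norm_ge_zero order_trans)
  then have "bdd_above ((\<lambda>y. inner u y) ` K)"
    by (meson bdd_aboveI2)
  then show ?thesis
    unfolding support_fun_def using assms(2) by (rule cSUP_upper2) simp
qed

lemma support_fun_le:
  fixes K :: "'b::euclidean_space set"
  assumes "K \<noteq> {}" and "\<And>y. y \<in> K \<Longrightarrow> inner u y \<le> c"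
  shows "support_fun K u \<le> c"
  unfolding support_fun_def using assms by (intro cSUP_least) auto

lemma support_fun_attained:
  fixes K :: "'b::euclidean_space set"
  assumes "compact K" and "K \<noteq> {}"
  obtains y where "y \<in> K" and "support_fun K u = inner u y"
proof -
  have "continuous_on K (inner u)"
    by (intro continuous_intros)
  then obtain y where y: "y \<in> K" "\<And>z. z \<in> K \<Longrightarrow> inner u z \<le> inner u y"
    using continuous_attains_sup[OF assms] by blast
  then have "support_fun K u = inner u y"
    using inner_le_support_fun[OF compact_imp_bounded[OF assms(1)]] support_fun_le[OF assms(2)]
    by (meson antisym)
  with y(1) show thesis by (rule that)
qed

lemma support_fun_lipschitz:
  fixes K :: "'b::euclidean_space set"
  assumes ne: "K \<noteq> {}" and B: "\<And>y. y \<in> K \<Longrightarrow> norm y \<le> B"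
  shows "B-lipschitz_on UNIV (support_fun K)"
proof -
  have bounded: "bounded K"
    using B by (auto simp: bounded_iff)
  have one_side: "support_fun K u \<le> support_fun K u' + B * dist u u'" for u u'
  proof (rule support_fun_le[OF ne])
    fix y assume y: "y \<in> K"
    have "inner u y = inner u' y + inner (u - u') y"
      by (simp add: inner_diff_left)
    also have "inner (u - u') y \<le> norm (u - u') * norm y"
      by (rule norm_cauchy_schwarz)
    also have "\<dots> \<le> norm (u - u') * B"
      using B[OF y] by (intro mult_left_mono) auto
    also have "inner u' y \<le> support_fun K u'"
      by (rule inner_le_support_fun[OF bounded y])
    finally show "inner u y \<le> support_fun K u' + B * dist u u'"
      by (simp add: dist_norm mult.commute)
  qed
  have "0 \<le> B"
    using ne B norm_ge_zero order_trans by blast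
  then show ?thesis
  proof (rule lipschitz_onI[rotated])
    fix u u' :: 'b
    show "dist (support_fun K u) (support_fun K u') \<le> B * dist u u'"
      using one_side[of u u'] one_side[of u' u] by (auto simp: dist_real_def dist_commute)
  qed
qed

lemma abs_support_fun_le:
  fixes K :: "'b::euclidean_space set"
  assumes ne: "K \<noteq> {}" and B: "\<And>y. y \<in> K \<Longrightarrow> norm y \<le> B"
  shows "\<bar>support_fun K u\<bar> \<le> B * norm u"
proof -
  have "support_fun K 0 = 0"
    using ne by (simp add: support_fun_def)
  then show ?thesis
    using lipschitz_onD[OF support_fun_lipschitz[OF assms], of u 0] by (simp add: dist_real_def)
qed

lemma continuous_on_support_fun:
  fixes K :: "'b::euclidean_space set"
  assumes "K \<noteq> {}" and "bounded K"
  shows "continuous_on UNIV (support_fun K)"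
proof -
  obtain B where "\<And>y. y \<in> K \<Longrightarrow> norm y \<le> B"
    using \<open>bounded K\<close> bounded_iff by metis
  then show ?thesis
    by (rule lipschitz_on_continuous_on[OF support_fun_lipschitz[OF \<open>K \<noteq> {}\<close>]])
qed

lemma borel_measurable_steiner_integrand:
  fixes K :: "'b::euclidean_space set"
  assumes "K \<noteq> {}" and "bounded K"
  shows "(\<lambda>x. indicator (ball 0 1) x *\<^sub>R (support_fun K (sgn x) *\<^sub>R sgn x)) \<in> borel_measurable lborel"
proof -
  have "support_fun K \<in> borel_measurable borel"
    by (rule borel_measurable_continuous_onI[OF continuous_on_support_fun[OF assms]])
  then have "(\<lambda>x. support_fun K (sgn x)) \<in> borel_measurable borel"
    using measurable_compose[OF borel_measurable_sgn] by (simp add: comp_def)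
  then have "(\<lambda>x. indicator (ball 0 1) x *\<^sub>R (support_fun K (sgn x) *\<^sub>R sgn x)) \<in> borel_measurable borel"
    by (intro borel_measurable_scaleR borel_measurable_indicator borel_measurable_sgn) auto
  then show ?thesis
    by simp
qed

lemma steiner_point_tendsto:
  fixes K :: "nat \<Rightarrow> 'b::euclidean_space set"
  assumes ne: "\<And>i. K i \<noteq> {}" "K0 \<noteq> {}"
    and bound: "\<And>i y. y \<in> K i \<Longrightarrow> norm y \<le> B" and "bounded K0"
    and support: "\<And>u. (\<lambda>i. support_fun (K i) u) \<longlonglongrightarrow> support_fun K0 u"
  shows "(\<lambda>i. steiner_point (K i)) \<longlonglongrightarrow> steiner_point K0"
proof -
  define S where "S = ball (0::'b) 1"
  define F where "F L x = indicator S x *\<^sub>R (support_fun L (sgn x) *\<^sub>R sgn x)" for L x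
  have "bounded (K i)" for i
    using bound by (auto simp: bounded_iff)
  have "(\<lambda>i. integral\<^sup>L lborel (F (K i))) \<longlonglongrightarrow> integral\<^sup>L lborel (F K0)"
  proof (rule integral_dominated_convergence[where w = "\<lambda>x. indicator S x * B"])
    show "F K0 \<in> borel_measurable lborel"
      unfolding F_def S_def by (rule borel_measurable_steiner_integrand[OF ne(2) \<open>bounded K0\<close>])
    show "F (K i) \<in> borel_measurable lborel" for i
      unfolding F_def S_def by (rule borel_measurable_steiner_integrand[OF ne(1) \<open>bounded (K i)\<close>])
    show "integrable lborel (\<lambda>x. indicator S x * B)"
      unfolding S_def by (intro integrable_mult_left integrable_real_indicator emeasure_bounded_finite) auto
    show "AE x in lborel. (\<lambda>i. F (K i) x) \<longlonglongrightarrow> F K0 x"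
      unfolding F_def by (intro AE_I2 tendsto_scaleR tendsto_const support)
    show "AE x in lborel. norm (F (K i) x) \<le> indicator S x * B" for i
    proof (rule AE_I2)
      fix x
      have "\<bar>support_fun (K i) (sgn x)\<bar> \<le> B * norm (sgn x)"
        by (rule abs_support_fun_le[OF ne(1) bound])
      then have "\<bar>support_fun (K i) (sgn x)\<bar> * norm (sgn x) \<le> B"
        using ne(1)[of i] bound[of _ i] by (cases "x = 0") (auto simp: norm_sgn intro: order_trans[OF norm_ge_zero])
      then show "norm (F (K i) x) \<le> indicator S x * B"
        by (simp add: F_def indicator_def)
    qed
  qed
  then show ?thesis
    unfolding steiner_point_def set_lebesgue_integral_def F_def S_def
    by (intro tendsto_scaleR tendsto_const)
qed

section \<open>Kuratowski convergence\<close>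

definition kuratowski_limit :: "(nat \<Rightarrow> 'b::metric_space set) \<Rightarrow> 'b set \<Rightarrow> bool" where
  "kuratowski_limit S S0 \<longleftrightarrow>
     (\<forall>y\<in>S0. \<forall>e>0. \<forall>\<^sub>F i in sequentially. \<exists>w\<in>S i. dist y w < e) \<and>
     (\<forall>z. z \<notin> S0 \<longrightarrow> (\<exists>N. open N \<and> z \<in> N \<and> (\<forall>\<^sub>F i in sequentially. N \<inter> S i = {})))"

lemma kuratowski_limitI:
  assumes "\<And>y e. y \<in> S0 \<Longrightarrow> e > 0 \<Longrightarrow> \<forall>\<^sub>F i in sequentially. \<exists>w\<in>S i. dist y w < e"
    and "\<And>z. z \<notin> S0 \<Longrightarrow> \<exists>N. open N \<and> z \<in> N \<and> (\<forall>\<^sub>F i in sequentially. N \<inter> S i = {})"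
  shows "kuratowski_limit S S0"
  using assms unfolding kuratowski_limit_def by blast

lemma kuratowski_limit_approx:
  assumes "kuratowski_limit S S0" and "y \<in> S0" and "e > 0"
  shows "\<forall>\<^sub>F i in sequentially. \<exists>w\<in>S i. dist y w < e"
  using assms unfolding kuratowski_limit_def by blast

lemma kuratowski_limit_avoid:
  assumes "kuratowski_limit S S0" and "z \<notin> S0"
  shows "\<exists>N. open N \<and> z \<in> N \<and> (\<forall>\<^sub>F i in sequentially. N \<inter> S i = {})"
  using assms unfolding kuratowski_limit_def by blast

lemma kuratowski_limit_eventually_disjoint:
  assumes lim: "kuratowski_limit S S0" and "compact C" and "C \<inter> S0 = {}"
  shows "\<forall>\<^sub>F i in sequentially. C \<inter> S i = {}"
proof -
  obtain N where N: "\<And>z. z \<in> C \<Longrightarrow> open (N z) \<and> z \<in> N z \<and> (\<forall>\<^sub>F i in sequentially. N z \<inter> S i = {})"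
    using kuratowski_limit_avoid[OF lim] assms(3) by (metis disjoint_iff)
  obtain D where D: "D \<subseteq> C" "finite D" "C \<subseteq> (\<Union>z\<in>D. N z)"
    using compactE_image[OF \<open>compact C\<close>, of C N] N by blast
  have "\<forall>\<^sub>F i in sequentially. \<forall>z\<in>D. N z \<inter> S i = {}"
    using D N by (intro eventually_ball_finite) auto
  then show ?thesis
    by eventually_elim (use D in blast)
qed

lemma infdist_lessE:
  assumes "A \<noteq> {}" and "infdist x A < e"
  obtains y where "y \<in> A" and "dist x y < e"
proof -
  have "bdd_below ((\<lambda>a. dist x a) ` A)"
    by (metis bdd_belowI2 zero_le_dist)
  then show thesis
    using assms that by (auto simp: infdist_notempty cINF_less_iff)
qed

lemma kuratowski_limit_infdist_less:
  assumes lim: "kuratowski_limit S S0" and "S0 \<noteq> {}" and as: "as \<longlonglongrightarrow> a"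
    and b: "infdist a S0 < b"
  shows "\<forall>\<^sub>F i in sequentially. infdist (as i) (S i) < b"
proof -
  define g where "g = b - infdist a S0"
  have g: "g > 0"
    using b by (simp add: g_def)
  then have "infdist a S0 < infdist a S0 + g / 3"
    by simp
  then obtain y where y: "y \<in> S0" "dist a y < infdist a S0 + g / 3"
    by (rule infdist_lessE[OF \<open>S0 \<noteq> {}\<close>])
  have "\<forall>\<^sub>F i in sequentially. (\<exists>w\<in>S i. dist y w < g / 3) \<and> dist (as i) a < g / 3"
    using g by (intro eventually_conj kuratowski_limit_approx[OF lim y(1)] tendstoD[OF as]) auto
  then show ?thesis
  proof eventually_elim
    case (elim i)
    then obtain w where w: "w \<in> S i" "dist y w < g / 3" and "dist (as i) a < g / 3"
      by blast
    have "infdist (as i) (S i) \<le> dist (as i) a + dist a y + dist y w"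
      using infdist_le[OF w(1), of "as i"] dist_triangle[of "as i" w a] dist_triangle[of a w y]
      by linarith
    then show ?case
      using \<open>dist (as i) a < g / 3\<close> y(2) w(2) g_def by argo
  qed
qed

lemma kuratowski_limit_infdist_greater:
  fixes S :: "nat \<Rightarrow> 'b::heine_borel set"
  assumes lim: "kuratowski_limit S S0" and ne: "\<And>i. S i \<noteq> {}" and as: "as \<longlonglongrightarrow> a"
    and b: "b < infdist a S0"
  shows "\<forall>\<^sub>F i in sequentially. b < infdist (as i) (S i)"
proof -
  define g where "g = infdist a S0 - b"
  have g: "g > 0"
    using b by (simp add: g_def)
  define C where "C = cball a (b + g / 2)"
  have "b + g / 2 < dist a z" if "z \<in> S0" for z
    using infdist_le[OF that, of a] g g_def by argo
  then have "C \<inter> S0 = {}"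
    by (force simp: C_def)
  then have "\<forall>\<^sub>F i in sequentially. C \<inter> S i = {}"
    by (rule kuratowski_limit_eventually_disjoint[OF lim, rotated]) (simp add: C_def)
  moreover have "\<forall>\<^sub>F i in sequentially. dist (as i) a < g / 4"
    using g by (intro tendstoD[OF as]) simp
  ultimately show ?thesis
  proof eventually_elim
    case (elim i)
    show ?case
    proof (rule ccontr)
      assume "\<not> b < infdist (as i) (S i)"
      then have "infdist (as i) (S i) < b + g / 4"
        using g by linarith
      then obtain w where w: "w \<in> S i" "dist (as i) w < b + g / 4"
        by (rule infdist_lessE[OF ne])
      then have "w \<in> C"
        using elim(2) dist_triangle[of a w "as i"] by (simp add: C_def dist_commute)
      with w(1) elim(1) show False
        by blast
    qed
  qed
qed

lemma kuratowski_limit_infdist: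
  fixes S :: "nat \<Rightarrow> 'b::heine_borel set"
  assumes lim: "kuratowski_limit S S0" and ne: "\<And>i. S i \<noteq> {}" "S0 \<noteq> {}" and as: "as \<longlonglongrightarrow> a"
  shows "(\<lambda>i. infdist (as i) (S i)) \<longlonglongrightarrow> infdist a S0"
  by (intro order_tendstoI kuratowski_limit_infdist_less[OF lim ne(2) as]
      kuratowski_limit_infdist_greater[OF lim ne(1) as])

lemma kuratowski_limit_support_fun_less:
  fixes K :: "nat \<Rightarrow> 'b::euclidean_space set"
  assumes lim: "kuratowski_limit K K0" and "compact K0"
    and ne: "\<And>i. K i \<noteq> {}" and bound: "\<And>i y. y \<in> K i \<Longrightarrow> norm y \<le> B"
    and b: "support_fun K0 u < b"
  shows "\<forall>\<^sub>F i in sequentially. support_fun (K i) u < b"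
proof -
  define c where "c = (support_fun K0 u + b) / 2"
  define C where "C = cball 0 B \<inter> {z. c \<le> inner u z}"
  have "inner u z \<le> support_fun K0 u" if "z \<in> K0" for z
    using inner_le_support_fun[OF compact_imp_bounded[OF \<open>compact K0\<close>] that] .
  then have "C \<inter> K0 = {}"
    using b by (fastforce simp: C_def c_def)
  then have "\<forall>\<^sub>F i in sequentially. C \<inter> K i = {}"
    by (rule kuratowski_limit_eventually_disjoint[OF lim, rotated])
      (simp add: C_def compact_Int_closed closed_halfspace_ge)
  then show ?thesis
  proof eventually_elim
    case (elim i)
    have "inner u y \<le> c" if "y \<in> K i" for y
      using elim that bound[OF that] by (force simp: C_def)
    then have "support_fun (K i) u \<le> c"
      by (rule support_fun_le[OF ne])
    then show ?case
      using b by (simp add: c_def)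
  qed
qed

lemma kuratowski_limit_support_fun_greater:
  fixes K :: "nat \<Rightarrow> 'b::euclidean_space set"
  assumes lim: "kuratowski_limit K K0" and "compact K0" and "K0 \<noteq> {}"
    and bound: "\<And>i y. y \<in> K i \<Longrightarrow> norm y \<le> B"
    and b: "b < support_fun K0 u"
  shows "\<forall>\<^sub>F i in sequentially. b < support_fun (K i) u"
proof -
  obtain y where y: "y \<in> K0" "support_fun K0 u = inner u y"
    by (rule support_fun_attained[OF \<open>compact K0\<close> \<open>K0 \<noteq> {}\<close>])
  define e where "e = (support_fun K0 u - b) / (norm u + 1)"
  have e: "e > 0"
    using b by (simp add: e_def add_nonneg_pos)
  have bounded: "bounded (K i)" for i
    using bound by (auto simp: bounded_iff)
  show ?thesis
    using kuratowski_limit_approx[OF lim y(1) e]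
  proof eventually_elim
    case (elim i)
    then obtain w where w: "w \<in> K i" "dist y w < e"
      by blast
    have "\<bar>inner u y - inner u w\<bar> \<le> norm u * dist y w"
      by (metis Cauchy_Schwarz_ineq2 dist_norm inner_diff_right)
    also have "\<dots> \<le> norm u * e"
      using w(2) by (intro mult_left_mono) auto
    also have "\<dots> < (norm u + 1) * e"
      using e by simp
    also have "\<dots> = support_fun K0 u - b"
      by (simp add: e_def add_nonneg_eq_0_iff)
    finally have "b < inner u w"
      using y(2) by linarith
    also have "inner u w \<le> support_fun (K i) u"
      by (rule inner_le_support_fun[OF bounded w(1)])
    finally show ?case .
  qed
qed

lemma kuratowski_limit_support_fun:
  fixes K :: "nat \<Rightarrow> 'b::euclidean_space set"
  assumes lim: "kuratowski_limit K K0" and "compact K0" and "K0 \<noteq> {}"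
    and ne: "\<And>i. K i \<noteq> {}" and bound: "\<And>i y. y \<in> K i \<Longrightarrow> norm y \<le> B"
  shows "(\<lambda>i. support_fun (K i) u) \<longlonglongrightarrow> support_fun K0 u"
  by (intro order_tendstoI kuratowski_limit_support_fun_less[OF lim \<open>compact K0\<close> ne bound]
      kuratowski_limit_support_fun_greater[OF lim \<open>compact K0\<close> \<open>K0 \<noteq> {}\<close> bound])

section \<open>Steiner sets\<close>

definition steiner_set :: "'b::metric_space set \<Rightarrow> 'b \<Rightarrow> 'b set" where
  "steiner_set S a = S \<inter> cball a (2 * infdist a S)"

lemma PhiS_eq_steiner_set: "PhiS H t x a = steiner_set (epiE H t x) a"
  unfolding PhiS_def steiner_set_def ..

lemma steiner_set_nonempty:
  fixes S :: "'b::heine_borel set"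
  assumes "closed S" and "S \<noteq> {}"
  shows "steiner_set S a \<noteq> {}"
proof -
  obtain z where "z \<in> S" "infdist a S = dist a z"
    using infdist_attains_inf[OF assms] by metis
  then have "z \<in> steiner_set S a"
    by (simp add: steiner_set_def)
  then show ?thesis
    by blast
qed

lemma compact_steiner_set: "closed S \<Longrightarrow> compact (steiner_set (S::'b::heine_borel set) a)"
  unfolding steiner_set_def by (simp add: closed_Int_compact)

lemma norm_le_steiner_set:
  fixes S :: "'b::real_normed_vector set"
  assumes "y \<in> steiner_set S a"
  shows "norm y \<le> norm a + 2 * infdist a S"
  using assms norm_triangle_ineq2[of y a] by (simp add: steiner_set_def dist_norm norm_minus_commute)

lemma steiner_set_interior_approx:
  fixes S :: "'b::{heine_borel, real_normed_vector} set"
  assumes "closed S" and "convex S" and y: "y \<in> steiner_set S a"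
    and d: "0 < infdist a S" and e: "e > 0"
  obtains y' where "y' \<in> S" and "dist y y' < e" and "dist a y' < 2 * infdist a S"
proof -
  have y: "y \<in> S" "dist a y \<le> 2 * infdist a S"
    using y by (auto simp: steiner_set_def)
  obtain z where z: "z \<in> S" "dist a z = infdist a S"
    using infdist_attains_inf[OF \<open>closed S\<close>, of a] y(1) by (metis empty_iff)
  define \<theta> where "\<theta> = min 1 (e / (2 * (dist y z + 1)))"
  have \<theta>: "0 < \<theta>" "\<theta> \<le> 1"
    using e by (auto simp: \<theta>_def add_nonneg_pos)
  have "\<theta> * dist y z \<le> e / (2 * (dist y z + 1)) * dist y z"
    by (intro mult_right_mono) (auto simp: \<theta>_def)
  also have "\<dots> < e / (2 * (dist y z + 1)) * (dist y z + 1)"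
    using e by (intro mult_strict_left_mono) (auto simp: add_nonneg_pos)
  also have "\<dots> = e / 2"
    by (simp add: field_simps add_nonneg_eq_0_iff)
  finally have \<theta>_small: "\<theta> * dist y z < e" 
    using e by linarith
  define y' where "y' = (1 - \<theta>) *\<^sub>R y + \<theta> *\<^sub>R z"
  have "y - y' = \<theta> *\<^sub>R (y - z)"
    by (simp add: y'_def algebra_simps)
  then have "dist y y' < e"
    using \<theta> \<theta>_small by (simp add: dist_norm)
  have "a - y' = (1 - \<theta>) *\<^sub>R (a - y) + \<theta> *\<^sub>R (a - z)"
    by (simp add: y'_def algebra_simps)
  then have "dist a y' \<le> (1 - \<theta>) * dist a y + \<theta> * dist a z"
    using norm_triangle_ineq[of "(1 - \<theta>) *\<^sub>R (a - y)" "\<theta> *\<^sub>R (a - z)"] \<theta>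
    by (simp add: dist_norm)
  also have "\<dots> \<le> (1 - \<theta>) * (2 * infdist a S) + \<theta> * infdist a S"
    using y(2) z(2) \<theta> by (intro add_mono mult_left_mono) auto
  also have "\<dots> < 2 * infdist a S"
    using \<theta> d by (simp add: algebra_simps)
  finally have "dist a y' < 2 * infdist a S" .
  moreover have "y' \<in> S"
    unfolding y'_def using convexD[OF \<open>convex S\<close> y(1) z(1)] \<theta> by simp
  ultimately show thesis
    using \<open>dist y y' < e\<close> that by blast
qed

lemma steiner_set_approx_interior_point:
  fixes S :: "nat \<Rightarrow> 'b::heine_borel set"
  assumes lim: "kuratowski_limit S S0" and ne: "\<And>i. S i \<noteq> {}" "S0 \<noteq> {}" and as: "as \<longlonglongrightarrow> a"
    and y: "y \<in> S0" "dist a y < 2 * infdist a S0" and e: "e > 0"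
  shows "\<forall>\<^sub>F i in sequentially. \<exists>w\<in>steiner_set (S i) (as i). dist y w < e"
proof -
  define \<kappa> where "\<kappa> = 2 * infdist a S0 - dist a y"
  have \<kappa>: "\<kappa> > 0"
    using y(2) by (simp add: \<kappa>_def)
  have "\<forall>\<^sub>F i in sequentially. (\<exists>w\<in>S i. dist y w < min e (\<kappa> / 4)) \<and> dist (as i) a < \<kappa> / 4 \<and>
      dist (infdist (as i) (S i)) (infdist a S0) < \<kappa> / 4"
    using e \<kappa>
    by (intro eventually_conj kuratowski_limit_approx[OF lim y(1)] tendstoD[OF as]
        tendstoD[OF kuratowski_limit_infdist[OF lim ne as]]) auto
  then show ?thesis
  proof eventually_elim
    case (elim i)
    then obtain w where w: "w \<in> S i" "dist y w < min e (\<kappa> / 4)"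
      by blast
    have "dist (as i) w \<le> dist (as i) a + dist a y + dist y w"
      using dist_triangle[of "as i" w a] dist_triangle[of a w y] by linarith
    then have "dist (as i) w \<le> 2 * infdist (as i) (S i)"
      using elim w(2) unfolding \<kappa>_def dist_real_def by argo
    with w show ?case
      by (auto simp: steiner_set_def)
  qed
qed

lemma steiner_set_approx_center:
  fixes S :: "nat \<Rightarrow> 'b::heine_borel set"
  assumes lim: "kuratowski_limit S S0" and closed: "\<And>i. closed (S i)"
    and ne: "\<And>i. S i \<noteq> {}" "S0 \<noteq> {}" and as: "as \<longlonglongrightarrow> a"
    and "infdist a S0 = 0" and e: "e > 0"
  shows "\<forall>\<^sub>F i in sequentially. \<exists>w\<in>steiner_set (S i) (as i). dist a w < e"
proof -
  have "(\<lambda>i. infdist (as i) (S i)) \<longlonglongrightarrow> 0"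
    using kuratowski_limit_infdist[OF lim ne as] \<open>infdist a S0 = 0\<close> by simp
  then have "\<forall>\<^sub>F i in sequentially. dist (as i) a < e / 2 \<and> dist (infdist (as i) (S i)) 0 < e / 2"
    using e by (intro eventually_conj tendstoD[OF as] tendstoD) auto
  then show ?thesis
  proof eventually_elim
    case (elim i)
    obtain w where w: "w \<in> S i" "infdist (as i) (S i) = dist (as i) w"
      using infdist_attains_inf[OF closed ne(1)] by metis
    then have "w \<in> steiner_set (S i) (as i)"
      by (simp add: steiner_set_def)
    moreover have "dist a w < e"
      using dist_triangle[of a w "as i"] elim w(2) by (auto simp: dist_commute)
    ultimately show ?case
      by blast
  qed
qed

lemma steiner_set_approx:
  fixes S :: "nat \<Rightarrow> 'b::{heine_borel, real_normed_vector} set"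
  assumes lim: "kuratowski_limit S S0" and closed: "\<And>i. closed (S i)" "closed S0" and "convex S0"
    and ne: "\<And>i. S i \<noteq> {}" "S0 \<noteq> {}" and as: "as \<longlonglongrightarrow> a"
    and y: "y \<in> steiner_set S0 a" and e: "e > 0"
  shows "\<forall>\<^sub>F i in sequentially. \<exists>w\<in>steiner_set (S i) (as i). dist y w < e"
proof (cases "infdist a S0 = 0")
  case True
  with y have "y = a"
    by (simp add: steiner_set_def)
  with steiner_set_approx_center[OF lim closed(1) ne as True e] show ?thesis
    by simp
next
  case False
  then have "0 < infdist a S0"
    using infdist_nonneg[of a S0] by simp
  have "e / 2 > 0"
    using e by simp
  then obtain y' where y': "y' \<in> S0" "dist y y' < e / 2" "dist a y' < 2 * infdist a S0"
    by (rule steiner_set_interior_approx[OF closed(2) \<open>convex S0\<close> y \<open>0 < infdist a S0\<close>])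
  show ?thesis
    using steiner_set_approx_interior_point[OF lim ne as y'(1,3) \<open>e / 2 > 0\<close>]
  proof eventually_elim
    case (elim i)
    then obtain w where w: "w \<in> steiner_set (S i) (as i)" "dist y' w < e / 2"
      by blast
    have "dist y w < e"
      using dist_triangle[of y w y'] y'(2) w(2) by linarith
    with w(1) show ?case
      by blast
  qed
qed

lemma steiner_set_avoid:
  fixes S :: "nat \<Rightarrow> 'b::heine_borel set"
  assumes lim: "kuratowski_limit S S0" and ne: "\<And>i. S i \<noteq> {}" "S0 \<noteq> {}" and as: "as \<longlonglongrightarrow> a"
    and z: "z \<notin> steiner_set S0 a"
  shows "\<exists>N. open N \<and> z \<in> N \<and> (\<forall>\<^sub>F i in sequentially. N \<inter> steiner_set (S i) (as i) = {})"
proof (cases "z \<in> S0")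
  case False
  then obtain N where "open N" "z \<in> N" "\<forall>\<^sub>F i in sequentially. N \<inter> S i = {}"
    using kuratowski_limit_avoid[OF lim] by blast
  then show ?thesis
    by (auto simp: steiner_set_def elim!: eventually_mono)
next
  case True
  define d0 where "d0 = infdist a S0"
  define \<rho> where "\<rho> = (dist a z - 2 * d0) / 2"
  have \<rho>: "\<rho> > 0"
    using z True by (simp add: steiner_set_def \<rho>_def d0_def)
  have "\<forall>\<^sub>F i in sequentially. dist (as i) a < \<rho> / 4 \<and> dist (infdist (as i) (S i)) d0 < \<rho> / 4"
    unfolding d0_def using \<rho>
    by (intro eventually_conj tendstoD[OF as] tendstoD[OF kuratowski_limit_infdist[OF lim ne as]]) auto
  then have "\<forall>\<^sub>F i in sequentially. ball z \<rho> \<inter> steiner_set (S i) (as i) = {}"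
  proof eventually_elim
    case (elim i)
    have False if "w \<in> ball z \<rho>" "w \<in> steiner_set (S i) (as i)" for w
    proof -
      have "dist a z \<le> dist a (as i) + dist (as i) w + dist w z"
        using dist_triangle[of a z "as i"] dist_triangle[of "as i" z w] by linarith
      moreover have "dist (as i) w \<le> 2 * infdist (as i) (S i)"
        using that(2) by (simp add: steiner_set_def)
      moreover have "dist a (as i) < \<rho> / 4" "infdist (as i) (S i) < d0 + \<rho> / 4"
        using elim dist_commute[of a "as i"] unfolding dist_real_def by argo+
      moreover have "dist w z < \<rho>"
        using that(1) by (simp add: dist_commute)
      ultimately show False
        using \<rho> unfolding \<rho>_def by argo
    qed
    then show ?case
      by blast
  qed
  then show ?thesis
    using \<rho> by (intro exI[of _ "ball z \<rho>"]) auto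
qed

lemma kuratowski_limit_steiner_set:
  fixes S :: "nat \<Rightarrow> 'b::{heine_borel, real_normed_vector} set"
  assumes "kuratowski_limit S S0" and "\<And>i. closed (S i)" "closed S0" and "convex S0"
    and "\<And>i. S i \<noteq> {}" "S0 \<noteq> {}" and "as \<longlonglongrightarrow> a"
  shows "kuratowski_limit (\<lambda>i. steiner_set (S i) (as i)) (steiner_set S0 a)"
  using steiner_set_approx[OF assms] steiner_set_avoid[OF assms(1,5,6,7)]
  by (intro kuratowski_limitI)

lemma steiner_point_steiner_set_tendsto:
  fixes S :: "nat \<Rightarrow> 'b::euclidean_space set"
  assumes lim: "kuratowski_limit S S0" and closed: "\<And>i. closed (S i)" "closed S0" and "convex S0"
    and ne: "\<And>i. S i \<noteq> {}" "S0 \<noteq> {}" and as: "as \<longlonglongrightarrow> a"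
  shows "(\<lambda>i. steiner_point (steiner_set (S i) (as i))) \<longlonglongrightarrow> steiner_point (steiner_set S0 a)"
proof -
  have "(\<lambda>i. norm (as i) + 2 * infdist (as i) (S i)) \<longlonglongrightarrow> norm a + 2 * infdist a S0"
    by (intro tendsto_intros as kuratowski_limit_infdist[OF lim ne as])
  then have "Bseq (\<lambda>i. norm (as i) + 2 * infdist (as i) (S i))"
    by (rule convergent_imp_Bseq[OF convergentI])
  then obtain B where B: "\<And>i. norm (norm (as i) + 2 * infdist (as i) (S i)) \<le> B"
    by (auto simp: Bseq_def)
  have bound: "norm y \<le> B" if "y \<in> steiner_set (S i) (as i)" for i y
    using norm_le_steiner_set[OF that] B[of i] by (metis abs_ge_self order_trans real_norm_def)
  show ?thesis
  proof (rule steiner_point_tendsto[OF _ _ bound])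
    show "steiner_set (S i) (as i) \<noteq> {}" for i
      by (rule steiner_set_nonempty[OF closed(1) ne(1)])
    show "steiner_set S0 a \<noteq> {}"
      by (rule steiner_set_nonempty[OF closed(2) ne(2)])
    show "bounded (steiner_set S0 a)"
      by (rule compact_imp_bounded[OF compact_steiner_set[OF closed(2)]])
    show "(\<lambda>i. support_fun (steiner_set (S i) (as i)) u) \<longlonglongrightarrow> support_fun (steiner_set S0 a) u" for u
    proof (rule kuratowski_limit_support_fun[OF kuratowski_limit_steiner_set[OF assms] _ _ _ bound])
      show "compact (steiner_set S0 a)"
        by (rule compact_steiner_set[OF closed(2)])
      show "steiner_set (S i) (as i) \<noteq> {}" for i
        by (rule steiner_set_nonempty[OF closed(1) ne(1)])
      show "steiner_set S0 a \<noteq> {}"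
        by (rule steiner_set_nonempty[OF closed(2) ne(2)])
    qed
  qed
qed

section \<open>Epigraphs of conjugate functions\<close>

definition conj_epigraph :: "('a::real_inner \<Rightarrow> real) \<Rightarrow> ('a \<times> real) set" where
  "conj_epigraph \<phi> = {(v, r). \<forall>p. inner v p - \<phi> p \<le> r}"

lemma epiE_eq_conj_epigraph: "epiE H t x = conj_epigraph (H t x)"
  unfolding epiE_def conj_epigraph_def conj_H_def by (auto simp: SUP_le_iff)

lemma conj_epigraph_eq_Inter_halfspaces:
  "conj_epigraph \<phi> = (\<Inter>p. {z. inner (p, -1) z \<le> \<phi> p})"
proof -
  have "inner (p, -1) (v, r) \<le> \<phi> p \<longleftrightarrow> inner v p - \<phi> p \<le> r" for p v r
    by (auto simp: inner_commute)
  then show ?thesis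
    unfolding conj_epigraph_def by auto
qed

lemma closed_conj_epigraph: "closed (conj_epigraph \<phi>)"
  unfolding conj_epigraph_eq_Inter_halfspaces by (intro closed_INT ballI closed_halfspace_le)

lemma convex_conj_epigraph: "convex (conj_epigraph \<phi>)"
  unfolding conj_epigraph_eq_Inter_halfspaces by (intro convex_INT convex_halfspace_le)

lemma convex_on_ge_of_unit_ball_bound:
  fixes \<phi> :: "'a::real_normed_vector \<Rightarrow> real"
  assumes convex: "convex_on UNIV \<phi>" and M: "\<And>p. norm p \<le> 1 \<Longrightarrow> \<bar>\<phi> p\<bar> \<le> M"
  shows "- M - 2 * M * norm p \<le> \<phi> p"
proof (cases "norm p \<le> 1")
  case True
  have "0 \<le> M"
    using M[of 0] by simp
  then have "0 \<le> 2 * M * norm p"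
    by simp
  with M[OF True] show ?thesis
    by linarith
next
  case False
  define n where "n = norm p"
  have n: "n > 1"
    using False by (simp add: n_def)
  define u where "u = (1 / n) *\<^sub>R p"
  have "norm u = 1"
    using n by (auto simp: u_def n_def)
  have "u = (1 - 1 / n) *\<^sub>R 0 + (1 / n) *\<^sub>R p"
    by (simp add: u_def)
  then have "\<phi> u \<le> (1 - 1 / n) * \<phi> 0 + (1 / n) * \<phi> p"
    using convex_onD[OF convex, of "1 / n" 0 p] n by simp
  then have "n * \<phi> u \<le> (n - 1) * \<phi> 0 + \<phi> p"
    using n by (simp add: field_simps)
  moreover have "n * (- M) \<le> n * \<phi> u"
    using M[of u] \<open>norm u = 1\<close> n by (intro mult_left_mono) auto
  moreover have "(n - 1) * \<phi> 0 \<le> (n - 1) * M"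
    using M[of 0] n by (intro mult_left_mono) auto
  moreover have "0 \<le> M"
    using M[of 0] by simp
  ultimately show ?thesis
    unfolding n_def[symmetric] by (simp add: algebra_simps)
qed

lemma regularized_sup_attained:
  fixes \<phi> :: "'a::euclidean_space \<Rightarrow> real"
  assumes convex: "convex_on UNIV \<phi>" and cont: "continuous_on UNIV \<phi>"
    and M: "\<And>p. norm p \<le> 1 \<Longrightarrow> \<bar>\<phi> p\<bar> \<le> M" and \<delta>: "\<delta> > 0"
  obtains p where "norm p \<le> max 1 (2 * (norm v + 4 * M) / \<delta>)"
    and "\<And>q. inner v q - \<phi> q - \<delta> / 2 * (norm q)\<^sup>2 \<le> inner v p - \<phi> p - \<delta> / 2 * (norm p)\<^sup>2"
proof -
  define R where "R = max 1 (2 * (norm v + 4 * M) / \<delta>)"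
  define G where "G q = inner v q - \<phi> q - \<delta> / 2 * (norm q)\<^sup>2" for q
  have R: "1 \<le> R" "2 * (norm v + 4 * M) / \<delta> \<le> R"
    by (simp_all add: R_def)
  then have R2: "norm v + 4 * M \<le> \<delta> * R / 2"
    using \<delta> by (simp add: pos_divide_le_eq mult.commute)
  have "0 \<le> M"
    using M[of 0] by simp
  have "continuous_on (cball 0 R) G"
    unfolding G_def by (intro continuous_intros continuous_on_subset[OF cont]) auto
  then obtain p where p: "p \<in> cball 0 R" "\<And>q. q \<in> cball 0 R \<Longrightarrow> G q \<le> G p"
    using continuous_attains_sup[OF compact_cball, of 0 R G] R(1) by fastforce
  have "G q \<le> G p" if "norm q > R" for q
  proof -
    have "R * norm q < norm q * norm q"
      using that R(1) by (intro mult_strict_right_mono) auto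
    then have "\<delta> / 2 * (R * norm q) < \<delta> / 2 * (norm q * norm q)"
      using \<delta> by (intro mult_strict_left_mono) auto
    then have "\<delta> * R / 2 * norm q < \<delta> / 2 * (norm q)\<^sup>2"
      by (simp add: power2_eq_square algebra_simps)
    moreover have "(norm v + 4 * M) * norm q \<le> \<delta> * R / 2 * norm q"
      using R2 by (intro mult_right_mono) auto
    moreover have "2 * M * 1 \<le> 2 * M * norm q"
      using that R(1) \<open>0 \<le> M\<close> by (intro mult_left_mono) auto
    moreover have "inner v q \<le> norm v * norm q"
      by (rule norm_cauchy_schwarz)
    moreover have "- M - 2 * M * norm q \<le> \<phi> q"
      by (rule convex_on_ge_of_unit_ball_bound[OF convex M])
    ultimately have "G q < - M"
      unfolding G_def by (simp add: algebra_simps)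
    also have "- M \<le> G 0"
      using M[of 0] by (simp add: G_def)
    also have "G 0 \<le> G p"
      using p(2) R(1) by simp
    finally show ?thesis
      by simp
  qed
  then show thesis
    using that[of p] p by (force simp: R_def G_def not_le)
qed

lemma regularized_maximizer_conj_epigraph:
  fixes \<phi> :: "'a::real_inner \<Rightarrow> real"
  assumes convex: "convex_on UNIV \<phi>" and \<delta>: "\<delta> > 0"
    and max: "\<And>q. inner v q - \<phi> q - \<delta> / 2 * (norm q)\<^sup>2 \<le> inner v p - \<phi> p - \<delta> / 2 * (norm p)\<^sup>2"
  shows "(v - \<delta> *\<^sub>R p, inner v p - \<phi> p - \<delta> * (norm p)\<^sup>2) \<in> conj_epigraph \<phi>"
proof -
  have "inner v (q - p) - (\<phi> q - \<phi> p) - \<delta> * inner p (q - p) \<le> 0" for q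
  proof (rule field_le_epsilon)
    fix e :: real assume "0 < e"
    define D where "D = (norm (q - p))\<^sup>2"
    define t where "t = min 1 (e / (\<delta> * D + 1))"
    have "0 \<le> D"
      by (simp add: D_def)
    then have pos: "0 < \<delta> * D + 1"
      using \<delta> by (simp add: add_nonneg_pos)
    then have t: "0 < t" "t \<le> 1"
      using \<open>0 < e\<close> by (simp_all add: t_def)
    have "t \<le> e / (\<delta> * D + 1)"
      by (simp add: t_def)
    then have t_small: "t * (\<delta> * D + 1) \<le> e"
      using pos by (simp add: pos_le_divide_eq)
    define qt where "qt = p + t *\<^sub>R (q - p)"
    have "\<phi> qt \<le> (1 - t) * \<phi> p + t * \<phi> q"
      using convex_onD[OF convex, of t p q] t by (simp add: qt_def algebra_simps)
    then have convex_step: "\<phi> qt - \<phi> p \<le> t * (\<phi> q - \<phi> p)"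
      by (simp add: algebra_simps)
    have norm_qt: "(norm qt)\<^sup>2 = (norm p)\<^sup>2 + 2 * t * inner p (q - p) + t\<^sup>2 * D"
      unfolding qt_def D_def power2_norm_eq_inner
      by (simp add: inner_add_left inner_add_right algebra_simps power2_eq_square inner_commute)
    have inner_qt: "inner v qt = inner v p + t * inner v (q - p)"
      by (simp add: qt_def inner_add_right)
    have "t * inner v (q - p) - (\<phi> qt - \<phi> p) - \<delta> * t * inner p (q - p) - \<delta> / 2 * t\<^sup>2 * D \<le> 0"
      using max[of qt] unfolding norm_qt inner_qt by (simp add: algebra_simps)
    with convex_step have "t * (inner v (q - p) - (\<phi> q - \<phi> p) - \<delta> * inner p (q - p)) \<le> t * (\<delta> / 2 * t * D)"
      by (simp add: algebra_simps power2_eq_square)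
    then have "inner v (q - p) - (\<phi> q - \<phi> p) - \<delta> * inner p (q - p) \<le> \<delta> / 2 * t * D"
      using t by simp
    also have "\<dots> \<le> t * (\<delta> * D + 1)"
      using t \<open>0 \<le> D\<close> \<delta> mult_nonneg_nonneg[of "t * \<delta>" D] by (simp add: algebra_simps)
    also have "\<dots> \<le> e"
      by (rule t_small)
    finally show "inner v (q - p) - (\<phi> q - \<phi> p) - \<delta> * inner p (q - p) \<le> 0 + e"
      by simp
  qed
  then show ?thesis
    by (simp add: conj_epigraph_def inner_diff_left inner_diff_right power2_norm_eq_inner algebra_simps)
qed

lemma conj_epigraph_nonempty:
  fixes \<phi> :: "'a::euclidean_space \<Rightarrow> real"
  assumes "convex_on UNIV \<phi>" and "continuous_on UNIV \<phi>"
  shows "conj_epigraph \<phi> \<noteq> {}"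
proof -
  obtain M where "\<And>p. p \<in> cball 0 1 \<Longrightarrow> norm (\<phi> p) \<le> M"
    using continuous_on_compact_bound[OF compact_cball continuous_on_subset[OF assms(2)]] by blast
  then have "\<And>p. norm p \<le> 1 \<Longrightarrow> \<bar>\<phi> p\<bar> \<le> M"
    by simp
  then have "\<exists>p. \<forall>q. inner 0 q - \<phi> q - 1 / 2 * (norm q)\<^sup>2 \<le> inner 0 p - \<phi> p - 1 / 2 * (norm p)\<^sup>2"
    by (metis regularized_sup_attained[OF assms] zero_less_one)
  then obtain p where "\<And>q. inner 0 q - \<phi> q - 1 / 2 * (norm q)\<^sup>2 \<le> inner 0 p - \<phi> p - 1 / 2 * (norm p)\<^sup>2"
    by blast
  then show ?thesis
    using regularized_maximizer_conj_epigraph[OF assms(1), of 1 0 p] by auto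
qed

lemma conj_epigraph_near:
  fixes \<psi> :: "'a::euclidean_space \<Rightarrow> real"
  assumes convex: "convex_on UNIV \<psi>" and cont: "continuous_on UNIV \<psi>"
    and M: "\<And>p. norm p \<le> 1 \<Longrightarrow> \<bar>\<psi> p\<bar> \<le> M" and \<delta>: "\<delta> > 0"
    and le: "\<And>p. norm p \<le> max 1 (2 * (norm v + 4 * M) / \<delta>) \<Longrightarrow> inner v p - \<psi> p \<le> r"
  obtains v' where "(v', r) \<in> conj_epigraph \<psi>" and "(norm (v - v'))\<^sup>2 \<le> 2 * \<delta> * (r + M)"
proof -
  obtain p where p: "norm p \<le> max 1 (2 * (norm v + 4 * M) / \<delta>)"
    and max: "\<And>q. inner v q - \<psi> q - \<delta> / 2 * (norm q)\<^sup>2 \<le> inner v p - \<psi> p - \<delta> / 2 * (norm p)\<^sup>2"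
    using regularized_sup_attained[OF convex cont M \<delta>, where v = v] by blast
  have "inner v p - \<psi> p \<le> r"
    by (rule le[OF p])
  have "0 \<le> \<delta> * (norm p)\<^sup>2"
    using \<delta> by simp
  have "(v - \<delta> *\<^sub>R p, inner v p - \<psi> p - \<delta> * (norm p)\<^sup>2) \<in> conj_epigraph \<psi>"
    by (rule regularized_maximizer_conj_epigraph[OF convex \<delta> max])
  then have "(v - \<delta> *\<^sub>R p, r) \<in> conj_epigraph \<psi>"
    using \<open>inner v p - \<psi> p \<le> r\<close> \<open>0 \<le> \<delta> * (norm p)\<^sup>2\<close>
    unfolding conj_epigraph_def by (auto intro: order_trans)
  moreover have "\<delta> / 2 * (norm p)\<^sup>2 \<le> r + M"
    using max[of 0] \<open>inner v p - \<psi> p \<le> r\<close> M[of 0] by simp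
  then have "\<delta> * (\<delta> * (norm p)\<^sup>2) \<le> \<delta> * (2 * (r + M))"
    using \<delta> by (intro mult_left_mono) auto
  then have "(norm (v - (v - \<delta> *\<^sub>R p)))\<^sup>2 \<le> 2 * \<delta> * (r + M)"
    using \<delta> by (simp add: power2_eq_square algebra_simps)
  ultimately show thesis
    by (rule that)
qed

lemma conj_epigraph_approx:
  fixes \<phi>s :: "nat \<Rightarrow> 'a::euclidean_space \<Rightarrow> real"
  assumes convex: "\<And>i. convex_on UNIV (\<phi>s i)"
    and cont: "\<And>i. continuous_on UNIV (\<phi>s i)" "continuous_on UNIV \<phi>"
    and lim: "\<And>C. compact C \<Longrightarrow> uniform_limit C \<phi>s \<phi> sequentially"
    and y: "y \<in> conj_epigraph \<phi>" and e: "e > 0"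
  shows "\<forall>\<^sub>F i in sequentially. \<exists>w\<in>conj_epigraph (\<phi>s i). dist y w < e"
proof -
  obtain v r where vr: "y = (v, r)"
    by force
  have y_le: "inner v p - \<phi> p \<le> r" for p
    using y by (auto simp: vr conj_epigraph_def)
  obtain M0 where M0: "\<And>p. p \<in> cball 0 1 \<Longrightarrow> norm (\<phi> p) \<le> M0"
    using continuous_on_compact_bound[OF compact_cball continuous_on_subset[OF cont(2)]] by blast
  define M where "M = M0 + 1"
  have "0 < r + M + 1"
    using y_le[of 0] M0[of 0] by (simp add: M_def)
  define \<eta> where "\<eta> = min (e / 4) 1"
  have \<eta>: "0 < \<eta>" "\<eta> \<le> e / 4" "\<eta> \<le> 1"
    using e by (auto simp: \<eta>_def)
  define \<delta> where "\<delta> = e\<^sup>2 / (8 * (r + M + 1))"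
  have \<delta>: "\<delta> > 0" "2 * \<delta> * (r + 1 + M) = (e / 2)\<^sup>2"
    using e \<open>0 < r + M + 1\<close> by (auto simp: \<delta>_def field_simps power2_eq_square)
  define R where "R = max 1 (2 * (norm v + 4 * M) / \<delta>)"
  have "\<forall>\<^sub>F i in sequentially.
      (\<forall>p\<in>cball 0 1. dist (\<phi>s i p) (\<phi> p) < 1) \<and> (\<forall>p\<in>cball 0 R. dist (\<phi>s i p) (\<phi> p) < \<eta>)"
    using \<eta> by (intro eventually_conj uniform_limitD[OF lim]) auto
  then show ?thesis
  proof eventually_elim
    case (elim i)
    have Mi: "\<bar>\<phi>s i p\<bar> \<le> M" if "norm p \<le> 1" for p
      using elim M0[of p] that by (force simp: M_def dist_real_def)
    have le: "inner v p - \<phi>s i p \<le> r + \<eta>" if "norm p \<le> R" for p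
      using elim y_le[of p] that by (force simp: dist_real_def)
    obtain v' where v': "(v', r + \<eta>) \<in> conj_epigraph (\<phi>s i)"
      and close: "(norm (v - v'))\<^sup>2 \<le> 2 * \<delta> * (r + \<eta> + M)"
      using conj_epigraph_near[OF convex cont(1) Mi \<delta>(1) le[unfolded R_def]] by blast
    note close
    also have "\<dots> \<le> (e / 2)\<^sup>2"
      using \<delta> \<eta> by (simp flip: \<delta>(2))
    finally have "norm (v - v') \<le> e / 2"
      by (rule power2_le_imp_le) (use e in simp)
    have "dist y (v', r + \<eta>) = norm (v - v', - \<eta>)"
      by (simp add: vr dist_norm)
    also have "\<dots> \<le> norm (v - v') + \<bar>\<eta>\<bar>"
      using norm_Pair_le[of "v - v'" "- \<eta>"] by simp
    also have "\<dots> < e"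
      using \<open>norm (v - v') \<le> e / 2\<close> \<eta> e by simp
    finally show ?case
      using v' by blast
  qed
qed

lemma conj_epigraph_avoid:
  fixes \<phi>s :: "nat \<Rightarrow> 'a::real_inner \<Rightarrow> real"
  assumes lim: "\<And>p. (\<lambda>i. \<phi>s i p) \<longlonglongrightarrow> \<phi> p" and z: "z \<notin> conj_epigraph \<phi>"
  shows "\<exists>N. open N \<and> z \<in> N \<and> (\<forall>\<^sub>F i in sequentially. N \<inter> conj_epigraph (\<phi>s i) = {})"
proof -
  obtain v r where vr: "z = (v, r)"
    by force
  obtain p where p: "r < inner v p - \<phi> p"
    using z by (auto simp: vr conj_epigraph_def not_le)
  define \<gamma> where "\<gamma> = (inner v p - \<phi> p - r) / 2"
  have "\<gamma> > 0"
    using p by (simp add: \<gamma>_def)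
  define N where "N = {w. \<phi> p + \<gamma> < inner (p, -1 :: real) w}"
  have "open N"
    unfolding N_def by (rule open_halfspace_gt)
  moreover have "z \<in> N"
    using p by (simp add: N_def vr \<gamma>_def inner_commute field_simps)
  moreover have "\<forall>\<^sub>F i in sequentially. N \<inter> conj_epigraph (\<phi>s i) = {}"
    using tendstoD[OF lim[of p] \<open>\<gamma> > 0\<close>]
  proof eventually_elim
    case (elim i)
    have "(v', r') \<notin> conj_epigraph (\<phi>s i)" if "(v', r') \<in> N" for v' r'
      using that elim by (auto simp: N_def conj_epigraph_def dist_real_def inner_commute not_le
          intro!: exI[of _ p])
    then show ?case
      by auto
  qed
  ultimately show ?thesis
    by blast
qed

lemma kuratowski_limit_conj_epigraph:
  fixes \<phi>s :: "nat \<Rightarrow> 'a::euclidean_space \<Rightarrow> real"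
  assumes "\<And>i. convex_on UNIV (\<phi>s i)"
    and "\<And>i. continuous_on UNIV (\<phi>s i)" "continuous_on UNIV \<phi>"
    and lim: "\<And>C. compact C \<Longrightarrow> uniform_limit C \<phi>s \<phi> sequentially"
  shows "kuratowski_limit (\<lambda>i. conj_epigraph (\<phi>s i)) (conj_epigraph \<phi>)"
proof (rule kuratowski_limitI)
  show "\<forall>\<^sub>F i in sequentially. \<exists>w\<in>conj_epigraph (\<phi>s i). dist y w < e"
    if "y \<in> conj_epigraph \<phi>" "e > 0" for y e
    by (rule conj_epigraph_approx[OF assms that])
  have "(\<lambda>i. \<phi>s i p) \<longlonglongrightarrow> \<phi> p" for p
    by (rule tendsto_uniform_limitI[OF lim[OF compact_sing]]) simp
  then show "\<exists>N. open N \<and> z \<in> N \<and> (\<forall>\<^sub>F i in sequentially. N \<inter> conj_epigraph (\<phi>s i) = {})"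
    if "z \<notin> conj_epigraph \<phi>" for z
    using conj_epigraph_avoid that by blast
qed

lemma steiner_point_conj_epigraph_tendsto:
  fixes \<phi>s :: "nat \<Rightarrow> 'a::euclidean_space \<Rightarrow> real"
  assumes convex: "\<And>i. convex_on UNIV (\<phi>s i)" "convex_on UNIV \<phi>"
    and cont: "\<And>i. continuous_on UNIV (\<phi>s i)" "continuous_on UNIV \<phi>"
    and lim: "\<And>C. compact C \<Longrightarrow> uniform_limit C \<phi>s \<phi> sequentially" and as: "as \<longlonglongrightarrow> a"
  shows "(\<lambda>i. steiner_point (steiner_set (conj_epigraph (\<phi>s i)) (as i)))
           \<longlonglongrightarrow> steiner_point (steiner_set (conj_epigraph \<phi>) a)"
  by (rule steiner_point_steiner_set_tendsto[OF kuratowski_limit_conj_epigraph[OF convex(1) cont lim]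
        closed_conj_epigraph closed_conj_epigraph convex_conj_epigraph
        conj_epigraph_nonempty[OF convex(1) cont(1)] conj_epigraph_nonempty[OF convex(2) cont(2)] as])

section \<open>Continuous convergence\<close>

lemma uniform_limit_along_convergent:
  fixes G :: "nat \<Rightarrow> 'x::heine_borel \<Rightarrow> 'p::metric_space \<Rightarrow> 'c::metric_space"
  assumes lim: "\<And>K. compact K \<Longrightarrow> uniform_limit K (\<lambda>i (x, p). G i x p) (\<lambda>(x, p). g x p) sequentially"
    and cont: "continuous_on UNIV (\<lambda>(x, p). g x p)" and xs: "xs \<longlonglongrightarrow> x" and "compact C"
  shows "uniform_limit C (\<lambda>i. G i (xs i)) (g x) sequentially"
proof (rule uniform_limitI)
  fix e :: real assume "0 < e"
  define D where "D = insert x (range xs) \<times> C"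
  have "compact D"
    unfolding D_def by (intro compact_Times compact_sequence_with_limit[OF xs] \<open>compact C\<close>)
  then have "uniformly_continuous_on D (\<lambda>(x, p). g x p)"
    by (intro compact_uniformly_continuous continuous_on_subset[OF cont]) auto
  then obtain \<delta> where "\<delta> > 0" and \<delta>: "\<And>z z'. z \<in> D \<Longrightarrow> z' \<in> D \<Longrightarrow> dist z' z < \<delta> \<Longrightarrow>
      dist ((\<lambda>(x, p). g x p) z') ((\<lambda>(x, p). g x p) z) < e / 2"
    using \<open>0 < e\<close> unfolding uniformly_continuous_on_def by (meson half_gt_zero)
  have "\<forall>\<^sub>F i in sequentially.
      (\<forall>z\<in>D. dist ((\<lambda>(x, p). G i x p) z) ((\<lambda>(x, p). g x p) z) < e / 2) \<and> dist (xs i) x < \<delta>"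
    using \<open>0 < e\<close> \<open>\<delta> > 0\<close>
    by (intro eventually_conj uniform_limitD[OF lim[OF \<open>compact D\<close>]] tendstoD[OF xs]) auto
  then show "\<forall>\<^sub>F i in sequentially. \<forall>p\<in>C. dist (G i (xs i) p) (g x p) < e"
  proof eventually_elim
    case (elim i)
    show ?case
    proof
      fix p assume "p \<in> C"
      then have "(xs i, p) \<in> D" "(x, p) \<in> D"
        by (auto simp: D_def)
      then have "dist (G i (xs i) p) (g (xs i) p) < e / 2" "dist (g (xs i) p) (g x p) < e / 2"
        using elim \<delta>[of "(x, p)" "(xs i, p)"] by (auto simp: dist_Pair_Pair)
      then show "dist (G i (xs i) p) (g x p) < e"
        using dist_triangle[of "G i (xs i) p" "g x p" "g (xs i) p"] by linarith
    qed
  qed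
qed

lemma uniform_limit_compact_sequentially:
  fixes f :: "nat \<Rightarrow> 'a::metric_space \<Rightarrow> 'b::metric_space"
  assumes "compact K" and "continuous_on K g"
    and lim: "\<And>r zs z. strict_mono r \<Longrightarrow> (\<forall>k. zs k \<in> K) \<Longrightarrow> zs \<longlonglongrightarrow> z \<Longrightarrow> (\<lambda>k. f (r k) (zs k)) \<longlonglongrightarrow> g z"
  shows "uniform_limit K f g sequentially"
proof (rule ccontr)
  assume "\<not> uniform_limit K f g sequentially"
  then obtain e where "e > 0" and "\<not> (\<forall>\<^sub>F i in sequentially. \<forall>z\<in>K. dist (f i z) (g z) < e)"
    unfolding uniform_limit_iff by blast
  then have "\<exists>\<^sub>F i in sequentially. \<exists>z\<in>K. e \<le> dist (f i z) (g z)"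
    by (simp add: not_eventually not_less)
  then have "infinite {i. \<exists>z\<in>K. e \<le> dist (f i z) (g z)}"
    unfolding cofinite_eq_sequentially[symmetric] frequently_cofinite .
  then obtain \<sigma> :: "nat \<Rightarrow> nat" where "strict_mono \<sigma>" and "\<forall>k. \<exists>z\<in>K. e \<le> dist (f (\<sigma> k) z) (g z)"
    using infinite_enumerate by blast
  then obtain zs where zs: "\<And>k. zs k \<in> K" "\<And>k. e \<le> dist (f (\<sigma> k) (zs k)) (g (zs k))"
    by metis
  obtain z r where "z \<in> K" "strict_mono r" and "(zs \<circ> r) \<longlonglongrightarrow> z"
    using compact_imp_seq_compact[OF \<open>compact K\<close>] zs(1) unfolding seq_compact_def by metis
  have "(\<lambda>k. f ((\<sigma> \<circ> r) k) ((zs \<circ> r) k)) \<longlonglongrightarrow> g z"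
    using \<open>strict_mono \<sigma>\<close> \<open>strict_mono r\<close> zs(1) \<open>(zs \<circ> r) \<longlonglongrightarrow> z\<close>
    by (intro lim strict_mono_o) (auto simp: comp_def)
  moreover have "(g \<circ> (zs \<circ> r)) \<longlonglongrightarrow> g z"
    using \<open>continuous_on K g\<close> \<open>z \<in> K\<close> zs(1) \<open>(zs \<circ> r) \<longlonglongrightarrow> z\<close>
    unfolding continuous_on_sequentially by auto
  ultimately have "(\<lambda>k. dist (f (\<sigma> (r k)) (zs (r k))) (g (zs (r k)))) \<longlonglongrightarrow> dist (g z) (g z)"
    unfolding comp_def by (rule tendsto_dist)
  then have "(\<lambda>k. dist (f (\<sigma> (r k)) (zs (r k))) (g (zs (r k)))) \<longlonglongrightarrow> 0"
    by simp
  with \<open>e > 0\<close> obtain k where "dist (f (\<sigma> (r k)) (zs (r k))) (g (zs (r k))) < e"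
    by (metis (no_types, lifting) eventually_sequentially order_refl order_tendstoD(2))
  with zs(2) show False
    by (simp add: not_le[symmetric])
qed

lemma hyp_H_continuous:
  assumes "hyp_H T H" and "t \<in> {0..T}"
  shows "continuous_on UNIV (\<lambda>(x, p). H t x p)"
  using assms unfolding hyp_H_def by blast

lemma hyp_H_convex:
  assumes "hyp_H T H" and "t \<in> {0..T}"
  shows "convex_on UNIV (H t x)"
  using assms unfolding hyp_H_def by blast

lemma hyp_H_continuous_in_p:
  assumes "hyp_H T H" and "t \<in> {0..T}"
  shows "continuous_on UNIV (H t x)"
proof -
  have "continuous_on UNIV ((\<lambda>(x, p). H t x p) \<circ> Pair x)"
    by (intro continuous_on_compose continuous_intros continuous_on_subset[OF hyp_H_continuous[OF assms]]) auto
  then show ?thesis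
    by (simp add: comp_def)
qed

lemma steiner_e_tendsto:
  fixes Hs :: "nat \<Rightarrow> real \<Rightarrow> 'a::euclidean_space \<Rightarrow> 'a \<Rightarrow> real"
  assumes hyp: "\<And>i. hyp_H T (Hs i)" "hyp_H T H" and t: "t \<in> {0..T}"
    and lim: "\<And>K. compact K \<Longrightarrow> uniform_limit K (\<lambda>i (x, p). Hs i t x p) (\<lambda>(x, p). H t x p) sequentially"
    and zs: "zs \<longlonglongrightarrow> z"
  shows "(\<lambda>i. steiner_e (Hs i) t (fst (zs i)) (snd (zs i))) \<longlonglongrightarrow> steiner_e H t (fst z) (snd z)"
  unfolding steiner_e_def PhiS_eq_steiner_set epiE_eq_conj_epigraph
  using hyp_H_convex[OF hyp(1) t] hyp_H_convex[OF hyp(2) t]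
    hyp_H_continuous_in_p[OF hyp(1) t] hyp_H_continuous_in_p[OF hyp(2) t]
    uniform_limit_along_convergent[OF lim hyp_H_continuous[OF hyp(2) t] tendsto_fst[OF zs]]
    tendsto_snd[OF zs]
  by (rule steiner_point_conj_epigraph_tendsto)

theorem theorem4p3:
  fixes T :: real
    and Hs :: "nat \<Rightarrow> real \<Rightarrow> 'a::euclidean_space \<Rightarrow> 'a \<Rightarrow> real"
    and H :: "real \<Rightarrow> 'a \<Rightarrow> 'a \<Rightarrow> real"
  assumes "\<And>i. hyp_H T (Hs i)"
    and "hyp_H T H"
    and "\<And>t K. t \<in> {0..T} \<Longrightarrow> compact K \<Longrightarrow>
           uniform_limit K (\<lambda>i (x, p). Hs i t x p) (\<lambda>(x, p). H t x p) sequentially"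
  shows "\<forall>t\<in>{0..T}. \<forall>K. compact K \<longrightarrow>
           uniform_limit K (\<lambda>i (x, a). steiner_f (Hs i) t x a) (\<lambda>(x, a). steiner_f H t x a) sequentially \<and>
           uniform_limit K (\<lambda>i (x, a). steiner_l (Hs i) t x a) (\<lambda>(x, a). steiner_l H t x a) sequentially"
proof (intro ballI allI impI)
  fix t and K :: "('a \<times> 'a \<times> real) set"
  assume t: "t \<in> {0..T}" and "compact K"
  define e where "e i z = steiner_e (Hs i) t (fst z) (snd z)" for i z
  define e0 where "e0 z = steiner_e H t (fst z) (snd z)" for z
  have "uniform_limit K e e0 sequentially"
  proof (rule uniform_limit_compact_sequentially[OF \<open>compact K\<close>])
    show "continuous_on K e0"
      unfolding e0_def
      by (intro continuous_on_sequentiallyI steiner_e_tendsto[OF assms(2,2) t uniform_limit_const])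
    show "(\<lambda>k. e (r k) (zs k)) \<longlonglongrightarrow> e0 z" if "strict_mono r" and "zs \<longlonglongrightarrow> z" for r zs z
      unfolding e_def e0_def
      using filterlim_compose[OF assms(3)[OF t] filterlim_subseq[OF \<open>strict_mono r\<close>]]
      by (intro steiner_e_tendsto[OF assms(1) assms(2) t _ \<open>zs \<longlonglongrightarrow> z\<close>]) (simp add: comp_def)
  qed
  then have "uniform_limit K (\<lambda>i z. fst (e i z)) (\<lambda>z. fst (e0 z)) sequentially"
    and "uniform_limit K (\<lambda>i z. snd (e i z)) (\<lambda>z. snd (e0 z)) sequentially"
    by (rule bounded_linear.uniform_limit[OF bounded_linear_fst],
        rule bounded_linear.uniform_limit[OF bounded_linear_snd])
  then show "uniform_limit K (\<lambda>i (x, a). steiner_f (Hs i) t x a) (\<lambda>(x, a). steiner_f H t x a) sequentially \<and>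
      uniform_limit K (\<lambda>i (x, a). steiner_l (Hs i) t x a) (\<lambda>(x, a). steiner_l H t x a) sequentially"
    by (simp add: e_def e0_def steiner_f_def steiner_l_def case_prod_beta')
qed

end
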